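(* Let $n\ge4$ and let $x$ be a point in the image $\Phi(K_{n-1})$. Then there exist a unique chain $D_0\subsetneq D_1\subsetneq\dots\subsetneq D_m$ of sets of pairwise noncrossing diagonals of $P_n$ and unique coefficients $a_0,\dots,a_m$ with all $a_i>0$ and $\sum_i a_i=1$ such that $x=\sum_{i=0}^m a_i\Phi(D_i)$.
   Context: $P_n$ is a regular $n$-gon whose edges are labeled cyclically by a fixed circular ordering; two diagonals cross if they meet in the interior; $\mathcal D$ is the set of diagonals. The associahedron $K_{n-1}$ is the $(n-3)$-dimensional convex polytope whose faces correspond bijectively to sets $D$ of pairwise noncrossing diagonals (face of $D$ contains face of $D'$ iff $D\subseteq D'$; vertices = triangulations, with $n-3$ diagonals). For a triangulation $T$, $\Phi(T)\in\mathbb R^{\mathcal D}$ has $d$-coordinate $1/(n-3)$ if $d\in T$ and $0$ otherwise; for a set $D$ of pairwise noncrossing diagonals, $\Phi(D)$ is the average of $\Phi(T)$ over triangulations $T\supseteq D$, and is the image of the barycenter $v_D$ of the face of $D$. $\Phi$ is extended to $K_{n-1}$ affinely on each simplex of its barycentric subdivision: for a chain $D_0\subsetneq\dots\subsetneq D_m$, $\Phi(\sum a_i v_{D_i})=\sum a_i\Phi(D_i)$ for $a_i\ge0$, $\sum a_i=1$. *)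

theory Defs
  imports Complex_Main
begin

text \<open>Vertices of P_n are 0,...,n-1 in cyclic order. A diagonal is a pair (i,j)
  with i < j < n joining two non-adjacent vertices.\<close>
definition diagonals :: "nat \<Rightarrow> (nat \<times> nat) set" where
  "diagonals n = {(i, j). i < j \<and> j < n \<and> i + 1 < j \<and> \<not> (i = 0 \<and> j = n - 1)}"

definition crosses :: "nat \<times> nat \<Rightarrow> nat \<times> nat \<Rightarrow> bool" where
  "crosses d e = (case d of (a, b) \<Rightarrow> case e of (c, d') \<Rightarrow>
      (a < c \<and> c < b \<and> b < d') \<or> (c < a \<and> a < d' \<and> d' < b))"

definition noncrossing :: "nat \<Rightarrow> (nat \<times> nat) set \<Rightarrow> bool" where
  "noncrossing n D = (D \<subseteq> diagonals n \<and> (\<forall>d\<in>D. \<forall>e\<in>D. \<not> crosses d e))"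

definition triangulation :: "nat \<Rightarrow> (nat \<times> nat) set \<Rightarrow> bool" where
  "triangulation n T = (noncrossing n T \<and> card T = n - 3)"

text \<open>Phi(T) in R^D, represented as a function on pairs (zero off the diagonals).\<close>
definition PhiT :: "nat \<Rightarrow> (nat \<times> nat) set \<Rightarrow> (nat \<times> nat) \<Rightarrow> real" where
  "PhiT n T = (\<lambda>d. if d \<in> T then 1 / real (n - 3) else 0)"

definition triangs_containing :: "nat \<Rightarrow> (nat \<times> nat) set \<Rightarrow> (nat \<times> nat) set set" where
  "triangs_containing n D = {T. triangulation n T \<and> D \<subseteq> T}"

definition PhiD :: "nat \<Rightarrow> (nat \<times> nat) set \<Rightarrow> (nat \<times> nat) \<Rightarrow> real" where
  "PhiD n D = (\<lambda>d. (\<Sum>T\<in>triangs_containing n D. PhiT n T d) / real (card (triangs_containing n D)))"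

definition nc_chain :: "nat \<Rightarrow> (nat \<times> nat) set list \<Rightarrow> bool" where
  "nc_chain n Ds = (Ds \<noteq> [] \<and> sorted_wrt (\<subset>) Ds \<and> (\<forall>D\<in>set Ds. noncrossing n D))"

definition comb :: "nat \<Rightarrow> (nat \<times> nat) set list \<Rightarrow> real list \<Rightarrow> (nat \<times> nat) \<Rightarrow> real" where
  "comb n Ds as = (\<lambda>d. \<Sum>i<length Ds. as ! i * PhiD n (Ds ! i) d)"

text \<open>Image of K_{n-1} under Phi: union over simplices of the barycentric subdivision
  (chains of faces) of the affine images.\<close>
definition Phi_image :: "nat \<Rightarrow> ((nat \<times> nat) \<Rightarrow> real) set" where
  "Phi_image n = {x. \<exists>Ds as. nc_chain n Ds \<and> length as = length Ds \<and>
      (\<forall>a\<in>set as. a \<ge> 0) \<and> sum_list as = 1 \<and> x = comb n Ds as}"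

end

theory Submission
  imports Defs
begin

text \<open>
  The coordinate \<open>\<Phi>(D)(d)\<close> is \<open>1/(n-3)\<close> for \<open>d \<in> D\<close>, positive exactly for the diagonals
  compatible with \<open>D\<close>, and strictly below \<open>1/(n-3)\<close> for every \<open>d \<notin> D\<close>: every noncrossing
  set extends to a triangulation, even one avoiding a prescribed \<open>d \<notin> D\<close>, which is seen by
  cutting the polygon along a diagonal of \<open>D\<close> and inducting on the number of vertices.
  So in \<open>x = \<Sum> a\<^sub>i \<Phi>(D\<^sub>i)\<close> the coordinates of \<open>x\<close> attaining \<open>(\<Sum> a\<^sub>i)/(n-3)\<close> are exactly
  those in \<open>D\<^sub>0\<close>. A diagonal of a triangulation through \<open>D\<^sub>0\<close> that crosses some
  \<open>e \<in> D\<^sub>1 - D\<^sub>0\<close> has positive \<open>\<Phi>(D\<^sub>0)\<close>-coordinate but vanishes under all later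
  \<open>\<Phi>(D\<^sub>i)\<close>; comparing two representations there determines \<open>a\<^sub>0\<close>, and induction along the
  chain gives uniqueness. Existence follows by dropping zero coefficients.
\<close>

text \<open>A finite \<open>V \<subseteq> \<nat>\<close> is a convex polygon with its vertices in increasing order; the
  induction runs over such sub-polygons of \<open>P\<^sub>n\<close>.\<close>

definition polygon_diagonals :: "nat set \<Rightarrow> (nat \<times> nat) set" where
  "polygon_diagonals V = {(i, j). i \<in> V \<and> j \<in> V \<and> i < j \<and>
     (\<exists>v\<in>V. i < v \<and> v < j) \<and> (\<exists>v\<in>V. v < i \<or> j < v)}"

definition noncrossing_on :: "nat set \<Rightarrow> (nat \<times> nat) set \<Rightarrow> bool" where
  "noncrossing_on V D \<longleftrightarrow> D \<subseteq> polygon_diagonals V \<and> (\<forall>d\<in>D. \<forall>e\<in>D. \<not> crosses d e)"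

definition triangulation_on :: "nat set \<Rightarrow> (nat \<times> nat) set \<Rightarrow> bool" where
  "triangulation_on V T \<longleftrightarrow> noncrossing_on V T \<and> card T = card V - 3"

definition inner_vertices :: "nat set \<Rightarrow> nat \<Rightarrow> nat \<Rightarrow> nat set" where
  "inner_vertices V i j = {v\<in>V. i \<le> v \<and> v \<le> j}"

definition outer_vertices :: "nat set \<Rightarrow> nat \<Rightarrow> nat \<Rightarrow> nat set" where
  "outer_vertices V i j = {v\<in>V. v \<le> i \<or> j \<le> v}"

lemma crosses_commute: "crosses d e \<longleftrightarrow> crosses e d"
  by (cases d; cases e) (auto simp: crosses_def)

lemma not_crosses_self: "\<not> crosses d d"
  by (cases d) (auto simp: crosses_def)

lemma diagonals_eq_polygon_diagonals: "diagonals n = polygon_diagonals {0..<n}"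
  by (auto simp: diagonals_def polygon_diagonals_def)

lemma noncrossing_iff_noncrossing_on: "noncrossing n D \<longleftrightarrow> noncrossing_on {0..<n} D"
  by (simp add: noncrossing_def noncrossing_on_def diagonals_eq_polygon_diagonals)

lemma triangulation_iff_triangulation_on: "triangulation n T \<longleftrightarrow> triangulation_on {0..<n} T"
  by (simp add: triangulation_def triangulation_on_def noncrossing_iff_noncrossing_on)

lemma finite_polygon_diagonals: "finite V \<Longrightarrow> finite (polygon_diagonals V)"
  by (rule finite_subset[of _ "V \<times> V"]) (auto simp: polygon_diagonals_def)

lemma noncrossing_on_finite: "finite V \<Longrightarrow> noncrossing_on V D \<Longrightarrow> finite D"
  using finite_polygon_diagonals finite_subset unfolding noncrossing_on_def by blast

lemma noncrossing_on_singleton: "d \<in> polygon_diagonals V \<Longrightarrow> noncrossing_on V {d}"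
  by (simp add: noncrossing_on_def not_crosses_self)

lemma polygon_diagonals_nonempty:
  assumes "finite V" and "4 \<le> card V"
  shows "polygon_diagonals V \<noteq> {}"
proof -
  obtain xs where xs: "sorted_wrt (<) xs" "set xs = V" "length xs = card V"
    using assms(1) by (metis sorted_list_of_set.length_sorted_key_list_of_set
        sorted_list_of_set.set_sorted_key_list_of_set sorted_list_of_set.strict_sorted_key_list_of_set)
  then have "xs!0 < xs!1" "xs!1 < xs!2" "xs!2 < xs!3" "xs!0 \<in> V" "xs!1 \<in> V" "xs!2 \<in> V" "xs!3 \<in> V"
    using assms(2) by (auto simp: sorted_wrt_nth_less)
  then have "(xs!0, xs!2) \<in> polygon_diagonals V"
    unfolding polygon_diagonals_def by force
  then show ?thesis by blast
qed

lemma inner_outer_diagonals: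
  shows "polygon_diagonals (inner_vertices V i j) \<subseteq> polygon_diagonals V"
    and "polygon_diagonals (outer_vertices V i j) \<subseteq> polygon_diagonals V"
    and "polygon_diagonals (inner_vertices V i j) \<inter> polygon_diagonals (outer_vertices V i j) = {}"
    and "(i, j) \<notin> polygon_diagonals (inner_vertices V i j) \<union> polygon_diagonals (outer_vertices V i j)"
  by (auto simp: polygon_diagonals_def inner_vertices_def outer_vertices_def)

lemma not_crosses_inner_outer:
  assumes "e \<in> polygon_diagonals (inner_vertices V i j)" and "f \<in> polygon_diagonals (outer_vertices V i j)"
  shows "\<not> crosses e f"
  using assms by (cases e; cases f)
    (auto simp: polygon_diagonals_def inner_vertices_def outer_vertices_def crosses_def)

lemma not_crosses_splitting_diagonal:
  assumes "e \<in> polygon_diagonals (inner_vertices V i j) \<union> polygon_diagonals (outer_vertices V i j)"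
  shows "\<not> crosses e (i, j)"
  using assms by (cases e) (auto simp: polygon_diagonals_def inner_vertices_def outer_vertices_def crosses_def)

context
  fixes V :: "nat set" and i j :: nat
  assumes ij: "(i, j) \<in> polygon_diagonals V"
begin

lemma card_inner_outer_vertices:
  assumes "finite V"
  shows "card (inner_vertices V i j) < card V" and "card (outer_vertices V i j) < card V"
    and "3 \<le> card (inner_vertices V i j)" and "3 \<le> card (outer_vertices V i j)"
    and "card (inner_vertices V i j) + card (outer_vertices V i j) = card V + 2"
proof -
  from ij obtain a b where ijV: "i \<in> V" "j \<in> V" "i < j" and a: "a \<in> V" "i < a" "a < j"
    and b: "b \<in> V" "b < i \<or> j < b" by (auto simp: polygon_diagonals_def)
  let ?V1 = "inner_vertices V i j" and ?V2 = "outer_vertices V i j"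
  have fin: "finite ?V1" "finite ?V2"
    using assms by (simp_all add: inner_vertices_def outer_vertices_def)
  have "b \<notin> ?V1" "a \<notin> ?V2"
    using a b by (auto simp: inner_vertices_def outer_vertices_def)
  then have "?V1 \<subset> V" "?V2 \<subset> V"
    using a(1) b(1) by (auto simp: inner_vertices_def outer_vertices_def)
  then show "card ?V1 < card V" "card ?V2 < card V"
    using assms psubset_card_mono by blast+
  have "{i, j, a} \<subseteq> ?V1" "{i, j, b} \<subseteq> ?V2"
    using ijV a b by (auto simp: inner_vertices_def outer_vertices_def)
  moreover have "card {i, j, a} = 3" "card {i, j, b} = 3"
    using ijV a b by auto
  ultimately show "3 \<le> card ?V1" "3 \<le> card ?V2"
    using card_mono[OF fin(1)] card_mono[OF fin(2)] by metis+
  have "?V1 \<union> ?V2 = V" "?V1 \<inter> ?V2 = {i, j}"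
    using ijV by (auto simp: inner_vertices_def outer_vertices_def)
  then show "card ?V1 + card ?V2 = card V + 2"
    using card_Un_Int[OF fin] ijV by simp
qed

lemma diagonal_in_inner_or_outer:
  assumes e: "e \<in> polygon_diagonals V" "e \<noteq> (i, j)" "\<not> crosses e (i, j)"
  shows "e \<in> polygon_diagonals (inner_vertices V i j) \<union> polygon_diagonals (outer_vertices V i j)"
proof (cases e)
  case (Pair p q)
  from ij have ijV: "i \<in> V" "j \<in> V" "i < j" by (auto simp: polygon_diagonals_def)
  from e(1) obtain u w where pq: "p \<in> V" "q \<in> V" "p < q" and u: "u \<in> V" "p < u" "u < q"
    and w: "w \<in> V" "w < p \<or> q < w" unfolding Pair by (auto simp: polygon_diagonals_def)
  have nc: "\<not> (i < p \<and> p < j \<and> j < q)" "\<not> (p < i \<and> i < q \<and> q < j)"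
    using e(3) unfolding Pair by (auto simp: crosses_def)
  have ne: "p \<noteq> i \<or> q \<noteq> j" using e(2) Pair by auto
  let ?V1 = "inner_vertices V i j" and ?V2 = "outer_vertices V i j"
  consider "i \<le> p \<and> q \<le> j" | "p \<le> i \<and> j \<le> q" | "q \<le> i \<or> j \<le> p"
    using nc pq by linarith
  then show ?thesis
  proof cases
    case 1
    have "p \<in> ?V1" "q \<in> ?V1" "u \<in> ?V1" "i \<in> ?V1" "j \<in> ?V1"
      using 1 pq u ijV by (auto simp: inner_vertices_def)
    moreover have "i < p \<or> q < j" using 1 ne by auto
    ultimately have "(p, q) \<in> polygon_diagonals ?V1"
      using pq u unfolding polygon_diagonals_def by blast
    then show ?thesis using Pair by auto
  next
    case 2
    have "p \<in> ?V2" "q \<in> ?V2" "w \<in> ?V2" "i \<in> ?V2" "j \<in> ?V2"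
      using 2 pq w ijV by (auto simp: outer_vertices_def)
    moreover have "\<exists>v\<in>?V2. p < v \<and> v < q"
      using 2 ne ijV \<open>i \<in> ?V2\<close> \<open>j \<in> ?V2\<close> by (cases "p < i") auto
    ultimately have "(p, q) \<in> polygon_diagonals ?V2"
      using pq w unfolding polygon_diagonals_def by blast
    then show ?thesis using Pair by auto
  next
    case 3
    have "p \<in> ?V2" "q \<in> ?V2" "u \<in> ?V2" "i \<in> ?V2" "j \<in> ?V2"
      using 3 pq u ijV by (auto simp: outer_vertices_def)
    moreover have "q < j \<or> i < p" using 3 ijV by auto
    ultimately have "(p, q) \<in> polygon_diagonals ?V2"
      using pq u unfolding polygon_diagonals_def by blast
    then show ?thesis using Pair by auto
  qed
qed

lemma noncrossing_on_split:
  assumes "noncrossing_on V D" and "(i, j) \<in> D"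
  shows "D \<subseteq> insert (i, j) (D \<inter> polygon_diagonals (inner_vertices V i j) \<union>
                              D \<inter> polygon_diagonals (outer_vertices V i j))"
  using assms diagonal_in_inner_or_outer unfolding noncrossing_on_def by blast

lemma triangulation_on_glue:
  assumes "finite V"
    and T1: "triangulation_on (inner_vertices V i j) T1"
    and T2: "triangulation_on (outer_vertices V i j) T2"
  shows "triangulation_on V (insert (i, j) (T1 \<union> T2))"
proof -
  let ?V1 = "inner_vertices V i j" and ?V2 = "outer_vertices V i j"
  have sub: "T1 \<subseteq> polygon_diagonals ?V1" "T2 \<subseteq> polygon_diagonals ?V2"
    and nc: "\<forall>d\<in>T1. \<forall>e\<in>T1. \<not> crosses d e" "\<forall>d\<in>T2. \<forall>e\<in>T2. \<not> crosses d e"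
    using T1 T2 by (auto simp: triangulation_on_def noncrossing_on_def)
  have parts: "\<not> crosses d e" if "d \<in> T1 \<union> T2" "e \<in> T1 \<union> T2" for d e
    using that sub nc not_crosses_inner_outer[where e = d and f = e] not_crosses_inner_outer[where e = e and f = d]
      crosses_commute[of d e]
    by blast
  have splitting: "\<not> crosses d (i, j)" "\<not> crosses (i, j) d" if "d \<in> T1 \<union> T2" for d
    using that sub not_crosses_splitting_diagonal[where e = d] crosses_commute[of d "(i, j)"] by blast+
  have "\<not> crosses d e" if "d \<in> insert (i, j) (T1 \<union> T2)" "e \<in> insert (i, j) (T1 \<union> T2)" for d e
    using that parts splitting not_crosses_self by blast
  moreover have "insert (i, j) (T1 \<union> T2) \<subseteq> polygon_diagonals V"
    using sub ij inner_outer_diagonals(1,2) by blast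
  moreover have "card (insert (i, j) (T1 \<union> T2)) = card T1 + card T2 + 1"
  proof -
    have "finite ?V1" "finite ?V2"
      using \<open>finite V\<close> by (simp_all add: inner_vertices_def outer_vertices_def)
    then have "finite T1" "finite T2"
      using sub finite_subset finite_polygon_diagonals by blast+
    moreover have "T1 \<inter> T2 = {}" "(i, j) \<notin> T1 \<union> T2"
      using sub inner_outer_diagonals(3,4) by blast+
    ultimately show ?thesis by (simp add: card_Un_disjoint)
  qed
  moreover have "card T1 + card T2 + 1 = card V - 3"
    using T1 T2 card_inner_outer_vertices[OF \<open>finite V\<close>]
    unfolding triangulation_on_def by linarith
  ultimately show ?thesis
    unfolding triangulation_on_def noncrossing_on_def by auto
qed

end

lemma exists_crossing_diagonal:
  assumes "d \<in> polygon_diagonals V"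
  shows "\<exists>e\<in>polygon_diagonals V. crosses e d"
proof -
  obtain i j a b where d: "d = (i, j)" "i \<in> V" "j \<in> V" "i < j"
    and a: "a \<in> V" "i < a" "a < j" and b: "b \<in> V" "b < i \<or> j < b"
    using assms by (auto simp: polygon_diagonals_def)
  show ?thesis
  proof (cases "b < i")
    case True
    then have "(b, a) \<in> polygon_diagonals V" "crosses (b, a) d"
      using d a b unfolding polygon_diagonals_def crosses_def by force+
    then show ?thesis by blast
  next
    case False
    then have "(a, b) \<in> polygon_diagonals V" "crosses (a, b) d"
      using d a b unfolding polygon_diagonals_def crosses_def by force+
    then show ?thesis by blast
  qed
qed

lemma noncrossing_on_extends:
  assumes "finite V" and "noncrossing_on V D"
  shows "\<exists>T. triangulation_on V T \<and> D \<subseteq> T"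
  using assms
proof (induction "card V" arbitrary: V D rule: less_induct)
  case less
  have split: "\<exists>T. triangulation_on V T \<and> D \<subseteq> T"
    if D: "noncrossing_on V D" "(i, j) \<in> D" for D i j
  proof -
    let ?V1 = "inner_vertices V i j" and ?V2 = "outer_vertices V i j"
    let ?D1 = "D \<inter> polygon_diagonals ?V1" and ?D2 = "D \<inter> polygon_diagonals ?V2"
    have ij: "(i, j) \<in> polygon_diagonals V" using D by (auto simp: noncrossing_on_def)
    have fin: "finite ?V1" "finite ?V2"
      using less.prems(1) by (simp_all add: inner_vertices_def outer_vertices_def)
    have "noncrossing_on ?V1 ?D1" "noncrossing_on ?V2 ?D2"
      using D(1) by (auto simp: noncrossing_on_def)
    then obtain T1 T2 where
      T1: "triangulation_on ?V1 T1" "?D1 \<subseteq> T1" and T2: "triangulation_on ?V2 T2" "?D2 \<subseteq> T2"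
      using less.hyps[OF card_inner_outer_vertices(1)[OF ij less.prems(1)] fin(1)]
        less.hyps[OF card_inner_outer_vertices(2)[OF ij less.prems(1)] fin(2)]
      by blast
    have "D \<subseteq> insert (i, j) (T1 \<union> T2)"
      using noncrossing_on_split[OF ij D] T1(2) T2(2) by blast
    then show ?thesis
      using triangulation_on_glue[OF ij less.prems(1) T1(1) T2(1)] by blast
  qed
  show ?case
  proof (cases "D = {}")
    case False
    then show ?thesis using split less.prems(2) by fast
  next
    case True
    show ?thesis
    proof (cases "4 \<le> card V")
      case True
      then obtain d where "d \<in> polygon_diagonals V"
        using polygon_diagonals_nonempty less.prems(1) by blast
      then obtain T where "triangulation_on V T"
        using split[of "{d}" "fst d" "snd d"] noncrossing_on_singleton by auto
      then show ?thesis using \<open>D = {}\<close> by blast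
    next
      case False
      then have "triangulation_on V {}"
        by (simp add: triangulation_on_def noncrossing_on_def)
      then show ?thesis using \<open>D = {}\<close> by blast
    qed
  qed
qed

lemma card_noncrossing_on_le:
  assumes "finite V" and "noncrossing_on V D"
  shows "card D \<le> card V - 3"
proof -
  obtain T where T: "triangulation_on V T" "D \<subseteq> T"
    using noncrossing_on_extends[OF assms] by blast
  then have "finite T"
    using noncrossing_on_finite[OF assms(1)] by (auto simp: triangulation_on_def)
  then show ?thesis
    using T card_mono unfolding triangulation_on_def by fastforce
qed

lemma noncrossing_on_extends_avoiding:
  assumes "finite V" and "noncrossing_on V D" and "d \<notin> D"
  shows "\<exists>T. triangulation_on V T \<and> D \<subseteq> T \<and> d \<notin> T"
  using assms
proof (induction "card V" arbitrary: V D rule: less_induct)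
  case less
  show ?case
  proof (cases "D = {}")
    case False
    then obtain i j where D: "(i, j) \<in> D" by auto
    let ?V1 = "inner_vertices V i j" and ?V2 = "outer_vertices V i j"
    let ?D1 = "D \<inter> polygon_diagonals ?V1" and ?D2 = "D \<inter> polygon_diagonals ?V2"
    have ij: "(i, j) \<in> polygon_diagonals V" using D less.prems(2) by (auto simp: noncrossing_on_def)
    have fin: "finite ?V1" "finite ?V2"
      using less.prems(1) by (simp_all add: inner_vertices_def outer_vertices_def)
    have "noncrossing_on ?V1 ?D1" "noncrossing_on ?V2 ?D2" "d \<notin> ?D1" "d \<notin> ?D2"
      using less.prems(2,3) by (auto simp: noncrossing_on_def)
    then obtain T1 T2 where
      T1: "triangulation_on ?V1 T1" "?D1 \<subseteq> T1" "d \<notin> T1" and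
      T2: "triangulation_on ?V2 T2" "?D2 \<subseteq> T2" "d \<notin> T2"
      using less.hyps[OF card_inner_outer_vertices(1)[OF ij less.prems(1)] fin(1)]
        less.hyps[OF card_inner_outer_vertices(2)[OF ij less.prems(1)] fin(2)]
      by blast
    have "D \<subseteq> insert (i, j) (T1 \<union> T2)"
      using noncrossing_on_split[OF ij less.prems(2) D] T1(2) T2(2) by blast
    moreover have "d \<notin> insert (i, j) (T1 \<union> T2)"
      using D less.prems(3) T1(3) T2(3) by blast
    ultimately show ?thesis
      using triangulation_on_glue[OF ij less.prems(1) T1(1) T2(1)] by blast
  next
    case True
    show ?thesis
    proof (cases "d \<in> polygon_diagonals V")
      case True
      then obtain e where e: "e \<in> polygon_diagonals V" "crosses e d"
        using exists_crossing_diagonal by blast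
      then obtain T where "triangulation_on V T" "e \<in> T"
        using noncrossing_on_extends[OF less.prems(1) noncrossing_on_singleton] by blast
      then show ?thesis
        using \<open>D = {}\<close> e(2) unfolding triangulation_on_def noncrossing_on_def by blast
    next
      case False
      then show ?thesis
        using noncrossing_on_extends[OF less.prems(1,2)] unfolding triangulation_on_def noncrossing_on_def
        by blast
    qed
  qed
qed

lemma finite_diagonals: "finite (diagonals n)"
  by (simp add: diagonals_eq_polygon_diagonals finite_polygon_diagonals)

lemma noncrossing_extends_to_triangulation:
  "noncrossing n D \<Longrightarrow> \<exists>T. triangulation n T \<and> D \<subseteq> T"
  using noncrossing_on_extends[of "{0..<n}" D]
  by (simp add: noncrossing_iff_noncrossing_on triangulation_iff_triangulation_on)

lemma noncrossing_extends_avoiding: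
  "noncrossing n D \<Longrightarrow> d \<notin> D \<Longrightarrow> \<exists>T. triangulation n T \<and> D \<subseteq> T \<and> d \<notin> T"
  using noncrossing_on_extends_avoiding[of "{0..<n}" D d]
  by (simp add: noncrossing_iff_noncrossing_on triangulation_iff_triangulation_on)

lemma card_noncrossing_le: "noncrossing n D \<Longrightarrow> card D \<le> n - 3"
  using card_noncrossing_on_le[of "{0..<n}" D] by (simp add: noncrossing_iff_noncrossing_on)

lemma noncrossing_subset: "noncrossing n T \<Longrightarrow> D \<subseteq> T \<Longrightarrow> noncrossing n D"
  unfolding noncrossing_def by blast

lemma noncrossing_insert:
  "noncrossing n (insert d D) \<longleftrightarrow> noncrossing n D \<and> d \<in> diagonals n \<and> (\<forall>e\<in>D. \<not> crosses d e)"
proof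
  assume "noncrossing n (insert d D)"
  then show "noncrossing n D \<and> d \<in> diagonals n \<and> (\<forall>e\<in>D. \<not> crosses d e)"
    unfolding noncrossing_def by blast
next
  assume h: "noncrossing n D \<and> d \<in> diagonals n \<and> (\<forall>e\<in>D. \<not> crosses d e)"
  then have "\<not> crosses e d" if "e \<in> D" for e
    using that crosses_commute[of e d] by blast
  with h show "noncrossing n (insert d D)"
    using not_crosses_self[of d] unfolding noncrossing_def by blast
qed

lemma triangulation_maximal:
  assumes T: "triangulation n T" and d: "d \<in> diagonals n" "d \<notin> T"
  shows "\<exists>e\<in>T. crosses d e"
proof (rule ccontr)
  assume "\<not> ?thesis"
  then have "noncrossing n (insert d T)"
    using T d(1) noncrossing_insert unfolding triangulation_def by blast
  moreover have "finite T"
    using T finite_diagonals finite_subset unfolding triangulation_def noncrossing_def by blast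
  ultimately show False
    using card_noncrossing_le[of n "insert d T"] T d(2) unfolding triangulation_def by simp
qed

lemma finite_triangs_containing: "finite (triangs_containing n D)"
proof (rule finite_subset)
  show "triangs_containing n D \<subseteq> Pow (diagonals n)"
    by (auto simp: triangs_containing_def triangulation_def noncrossing_def)
qed (simp add: finite_diagonals)

lemma triangs_containing_nonempty: "noncrossing n D \<Longrightarrow> triangs_containing n D \<noteq> {}"
  using noncrossing_extends_to_triangulation by (auto simp: triangs_containing_def)

lemma PhiD_eq_ratio:
  "PhiD n D d = real (card {T \<in> triangs_containing n D. d \<in> T})
                  / (real (n - 3) * real (card (triangs_containing n D)))"
proof -
  have "(\<Sum>T\<in>triangs_containing n D. PhiT n T d)
        = (\<Sum>T\<in>{T \<in> triangs_containing n D. d \<in> T}. 1 / real (n - 3))"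
    unfolding PhiT_def by (rule sum.inter_filter[OF finite_triangs_containing, symmetric])
  then show ?thesis by (simp add: PhiD_def)
qed

lemma PhiD_nonneg: "0 \<le> PhiD n D d"
  by (simp add: PhiD_eq_ratio)

lemma PhiD_le: "PhiD n D d \<le> 1 / real (n - 3)"
proof -
  let ?A = "triangs_containing n D"
  have "card {T \<in> ?A. d \<in> T} \<le> card ?A"
    by (rule card_mono[OF finite_triangs_containing]) auto
  then show ?thesis
    by (cases "card ?A = 0") (simp_all add: PhiD_eq_ratio divide_simps)
qed

context
  fixes n :: nat and D :: "(nat \<times> nat) set"
  assumes n: "4 \<le> n" and D: "noncrossing n D"
begin

lemma PhiD_pos_iff: "0 < PhiD n D d \<longleftrightarrow> d \<in> diagonals n \<and> (\<forall>e\<in>D. \<not> crosses d e)"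
proof -
  let ?A = "triangs_containing n D"
  have pos: "0 < real (n - 3) * real (card ?A)"
    using n triangs_containing_nonempty[OF D] finite_triangs_containing by (simp add: card_gt_0_iff)
  have "0 < PhiD n D d \<longleftrightarrow> 0 < card {T \<in> ?A. d \<in> T}"
    unfolding PhiD_eq_ratio by (simp only: pos_less_divide_eq[OF pos]) simp
  also have "\<dots> \<longleftrightarrow> {T \<in> ?A. d \<in> T} \<noteq> {}"
    using finite_triangs_containing by (simp add: card_gt_0_iff)
  also have "\<dots> \<longleftrightarrow> (\<exists>T. triangulation n T \<and> insert d D \<subseteq> T)"
    unfolding triangs_containing_def by blast
  also have "\<dots> \<longleftrightarrow> noncrossing n (insert d D)"
  proof
    assume "\<exists>T. triangulation n T \<and> insert d D \<subseteq> T"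
    then show "noncrossing n (insert d D)"
      using noncrossing_subset unfolding triangulation_def by blast
  qed (rule noncrossing_extends_to_triangulation)
  also have "\<dots> \<longleftrightarrow> d \<in> diagonals n \<and> (\<forall>e\<in>D. \<not> crosses d e)"
    using D noncrossing_insert by blast
  finally show ?thesis .
qed

lemma PhiD_eq_max_iff: "PhiD n D d = 1 / real (n - 3) \<longleftrightarrow> d \<in> D"
proof -
  let ?A = "triangs_containing n D"
  have "real (n - 3) \<noteq> 0" "real (card ?A) \<noteq> 0"
    using n triangs_containing_nonempty[OF D] finite_triangs_containing by auto
  then have "PhiD n D d = 1 / real (n - 3) \<longleftrightarrow> card {T \<in> ?A. d \<in> T} = card ?A"
    unfolding PhiD_eq_ratio by (simp add: divide_eq_eq)
  also have "\<dots> \<longleftrightarrow> {T \<in> ?A. d \<in> T} = ?A"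
    using card_subset_eq[OF finite_triangs_containing, of "{T \<in> ?A. d \<in> T}"] by auto
  also have "\<dots> \<longleftrightarrow> d \<in> D"
    using noncrossing_extends_avoiding[OF D, of d] by (auto simp: triangs_containing_def)
  finally show ?thesis .
qed

end

definition weighted_chain :: "nat \<Rightarrow> ((nat \<times> nat) set \<times> real) list \<Rightarrow> bool" where
  "weighted_chain n ps \<longleftrightarrow> ps \<noteq> [] \<and> sorted_wrt (\<subset>) (map fst ps) \<and>
     (\<forall>p\<in>set ps. noncrossing n (fst p) \<and> 0 < snd p)"

definition chain_point :: "nat \<Rightarrow> ((nat \<times> nat) set \<times> real) list \<Rightarrow> (nat \<times> nat) \<Rightarrow> real" where
  "chain_point n ps d = (\<Sum>p\<leftarrow>ps. snd p * PhiD n (fst p) d)"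

lemma chain_point_Nil [simp]: "chain_point n [] d = 0"
  by (simp add: chain_point_def)

lemma chain_point_Cons [simp]:
  "chain_point n (p # ps) d = snd p * PhiD n (fst p) d + chain_point n ps d"
  by (simp add: chain_point_def)

lemma chain_point_nonneg: "\<forall>p\<in>set ps. 0 \<le> snd p \<Longrightarrow> 0 \<le> chain_point n ps d"
  by (induction ps) (simp_all add: PhiD_nonneg)

lemma chain_point_le:
  "\<forall>p\<in>set ps. 0 \<le> snd p \<Longrightarrow> chain_point n ps d \<le> (\<Sum>p\<leftarrow>ps. snd p) / real (n - 3)"
proof (induction ps)
  case (Cons p ps)
  have "snd p * PhiD n (fst p) d \<le> snd p * (1 / real (n - 3))"
    using Cons.prems mult_left_mono[OF PhiD_le] by simp
  then show ?case
    using Cons by (simp add: add_divide_distrib)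
qed simp

lemma chain_point_eq_0: "\<forall>p\<in>set ps. PhiD n (fst p) d = 0 \<Longrightarrow> chain_point n ps d = 0"
  by (induction ps) simp_all

lemma chain_point_common_diagonal:
  assumes "4 \<le> n" and "\<forall>p\<in>set ps. noncrossing n (fst p) \<and> d \<in> fst p"
  shows "chain_point n ps d = (\<Sum>p\<leftarrow>ps. snd p) / real (n - 3)"
  using assms(2)
proof (induction ps)
  case (Cons p ps)
  then have "PhiD n (fst p) d = 1 / real (n - 3)"
    using PhiD_eq_max_iff[OF assms(1)] by simp
  then show ?case
    using Cons by (simp add: add_divide_distrib)
qed simp

lemma chain_point_filter_pos:
  "chain_point n (filter (\<lambda>p. 0 < snd p) ps) d = chain_point n ps d"
  if "\<forall>p\<in>set ps. 0 \<le> snd p"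
  using that by (induction ps) auto

lemma weighted_chain_Cons:
  "weighted_chain n (p # ps) \<longleftrightarrow> noncrossing n (fst p) \<and> 0 < snd p \<and>
     (\<forall>q\<in>set ps. fst p \<subset> fst q) \<and> (ps = [] \<or> weighted_chain n ps)"
  by (cases ps) (auto simp: weighted_chain_def)

lemma weighted_chain_total_pos: "weighted_chain n ps \<Longrightarrow> 0 < (\<Sum>p\<leftarrow>ps. snd p)"
proof (cases ps)
  case (Cons p ps')
  moreover assume "weighted_chain n ps"
  ultimately have "0 < snd p" "\<forall>q\<in>set ps'. 0 < snd q"
    by (auto simp: weighted_chain_def)
  moreover from this(2) have "0 \<le> (\<Sum>q\<leftarrow>ps'. snd q)"
    by (intro sum_list_nonneg) auto
  ultimately show ?thesis using Cons by simp
qed (simp add: weighted_chain_def)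

lemma chain_point_eq_max_iff:
  assumes n: "4 \<le> n" and ch: "weighted_chain n ((D, a) # ps)"
  shows "chain_point n ((D, a) # ps) d = (a + (\<Sum>p\<leftarrow>ps. snd p)) / real (n - 3) \<longleftrightarrow> d \<in> D"
proof
  assume "d \<in> D"
  moreover have "\<forall>p\<in>set ps. noncrossing n (fst p) \<and> D \<subseteq> fst p" "noncrossing n D"
    using ch by (auto simp: weighted_chain_def)
  ultimately show "chain_point n ((D, a) # ps) d = (a + (\<Sum>p\<leftarrow>ps. snd p)) / real (n - 3)"
    using chain_point_common_diagonal[OF n, of "(D, a) # ps" d] by auto
next
  assume eq: "chain_point n ((D, a) # ps) d = (a + (\<Sum>p\<leftarrow>ps. snd p)) / real (n - 3)"
  show "d \<in> D"
  proof (rule ccontr)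
    assume "d \<notin> D"
    have D: "noncrossing n D" "0 < a" and nonneg: "\<forall>p\<in>set ps. 0 \<le> snd p"
      using ch by (auto simp: weighted_chain_def)
    have "PhiD n D d \<noteq> 1 / real (n - 3)"
      using PhiD_eq_max_iff[OF n D(1), of d] \<open>d \<notin> D\<close> by blast
    then have "PhiD n D d < 1 / real (n - 3)"
      using PhiD_le[of n D d] by (simp add: less_le)
    then have "a * PhiD n D d < a / real (n - 3)"
      using D(2) mult_strict_left_mono by fastforce
    then have "chain_point n ((D, a) # ps) d < a / real (n - 3) + (\<Sum>p\<leftarrow>ps. snd p) / real (n - 3)"
      using chain_point_le[OF nonneg, of n d] by simp
    then show False
      using eq by (simp add: add_divide_distrib)
  qed
qed

lemma exists_diagonal_vanishing_on_tail:
  assumes n: "4 \<le> n" and ch: "weighted_chain n ((D, a) # ps)" and "ps \<noteq> []"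
  shows "\<exists>d. 0 < PhiD n D d \<and> chain_point n ps d = 0"
proof -
  obtain E b ps' where ps: "ps = (E, b) # ps'"
    using \<open>ps \<noteq> []\<close> by (metis list.exhaust prod.exhaust)
  have D: "noncrossing n D" "D \<subset> E" and E: "noncrossing n E"
    and above_E: "\<forall>p\<in>set ps. E \<subseteq> fst p" and tail: "\<forall>p\<in>set ps. noncrossing n (fst p)"
    using ch unfolding ps weighted_chain_def by auto
  obtain e where e: "e \<in> E" "e \<notin> D" using D(2) by blast
  obtain T where T: "triangulation n T" "D \<subseteq> T" "e \<notin> T"
    using noncrossing_extends_avoiding[OF D(1) e(2)] by blast
  have "e \<in> diagonals n" using E e(1) by (auto simp: noncrossing_def)
  then obtain f where f: "f \<in> T" "crosses f e"
    using triangulation_maximal[OF T(1) _ T(3)] crosses_commute by blast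
  have "noncrossing n (insert f D)"
    using T f(1) noncrossing_subset unfolding triangulation_def by blast
  then have "0 < PhiD n D f"
    using PhiD_pos_iff[OF n D(1)] noncrossing_insert by blast
  moreover have "PhiD n (fst p) f = 0" if "p \<in> set ps" for p
  proof -
    \<comment> \<open>every later face contains \<open>e\<close>, which \<open>f\<close> crosses\<close>
    have "e \<in> fst p" using above_E that e(1) by blast
    then have "\<not> 0 < PhiD n (fst p) f"
      using PhiD_pos_iff[OF n] tail that f(2) by blast
    then show ?thesis using PhiD_nonneg[of n "fst p" f] by linarith
  qed
  ultimately show ?thesis using chain_point_eq_0 by blast
qed

lemma weighted_chain_head_weight_le:
  assumes n: "4 \<le> n"
    and ch1: "weighted_chain n ((D, a) # ps)" and ch2: "weighted_chain n ((D, b) # qs)"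
    and total: "a + (\<Sum>p\<leftarrow>ps. snd p) = b + (\<Sum>q\<leftarrow>qs. snd q)"
    and point: "chain_point n ((D, a) # ps) = chain_point n ((D, b) # qs)"
  shows "b \<le> a"
proof (rule ccontr)
  assume "\<not> b \<le> a"
  have nonneg: "\<forall>q\<in>set qs. 0 \<le> snd q" using ch2 by (auto simp: weighted_chain_def)
  then have "0 \<le> (\<Sum>q\<leftarrow>qs. snd q)" by (intro sum_list_nonneg) auto
  then have "ps \<noteq> []" using total \<open>\<not> b \<le> a\<close> by auto
  then obtain d where d: "0 < PhiD n D d" "chain_point n ps d = 0"
    using exists_diagonal_vanishing_on_tail[OF n ch1] by blast
  have "chain_point n ((D, a) # ps) d = a * PhiD n D d" using d(2) by simp
  also have "\<dots> < b * PhiD n D d" using d(1) \<open>\<not> b \<le> a\<close> by simp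
  also have "\<dots> \<le> chain_point n ((D, b) # qs) d" using chain_point_nonneg[OF nonneg] by simp
  finally show False using point by simp
qed

lemma weighted_chain_unique:
  assumes "4 \<le> n" and "weighted_chain n ps" and "weighted_chain n qs"
    and "(\<Sum>p\<leftarrow>ps. snd p) = (\<Sum>q\<leftarrow>qs. snd q)" and "chain_point n ps = chain_point n qs"
  shows "ps = qs"
  using assms(2-)
proof (induction ps arbitrary: qs)
  case Nil
  then show ?case by (simp add: weighted_chain_def)
next
  case (Cons p ps)
  obtain D a where p: "p = (D, a)" by fastforce
  obtain E b qs' where qs: "qs = (E, b) # qs'"
    using Cons.prems(2) unfolding weighted_chain_def by (metis list.exhaust prod.exhaust)
  note ch1 = Cons.prems(1)[unfolded p] and ch2 = Cons.prems(2)[unfolded qs]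
  have total: "a + (\<Sum>p\<leftarrow>ps. snd p) = b + (\<Sum>q\<leftarrow>qs'. snd q)"
    using Cons.prems(3) p qs by simp
  have point: "chain_point n ((D, a) # ps) = chain_point n ((E, b) # qs')"
    using Cons.prems(4) unfolding p qs .
  have "D = E"
    using chain_point_eq_max_iff[OF assms(1) ch1] chain_point_eq_max_iff[OF assms(1) ch2]
      total point by auto
  note ch2 = ch2[folded \<open>D = E\<close>] and point = point[folded \<open>D = E\<close>]
  have "a = b"
    using weighted_chain_head_weight_le[OF assms(1) ch1 ch2 total point]
      weighted_chain_head_weight_le[OF assms(1) ch2 ch1 total[symmetric] point[symmetric]]
    by simp
  have total': "(\<Sum>p\<leftarrow>ps. snd p) = (\<Sum>q\<leftarrow>qs'. snd q)" using total \<open>a = b\<close> by simp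
  have tails: "ps = [] \<or> weighted_chain n ps" "qs' = [] \<or> weighted_chain n qs'"
    using ch1 ch2 weighted_chain_Cons by blast+
  have "ps = qs'"
  proof (cases "ps = []")
    case True
    then show ?thesis using tails(2) total' weighted_chain_total_pos by force
  next
    case False
    then have "qs' \<noteq> []" using tails(1) total' weighted_chain_total_pos by force
    moreover have "chain_point n ps d = chain_point n qs' d" for d
      using fun_cong[OF point, of d] \<open>a = b\<close> by simp
    ultimately show ?thesis
      using Cons.IH[of qs'] False tails total' by blast
  qed
  then show ?case using p qs \<open>D = E\<close> \<open>a = b\<close> by simp
qed

lemma chain_point_zip: "length as = length Ds \<Longrightarrow> chain_point n (zip Ds as) = comb n Ds as"
proof (induction Ds arbitrary: as)
  case (Cons D Ds)
  then obtain a as' where "as = a # as'" by (cases as) auto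
  with Cons show ?case
    by (auto simp: comb_def lessThan_Suc_eq_insert_0 sum.reindex)
qed (simp add: comb_def fun_eq_iff)

lemma weighted_chain_zip:
  "length as = length Ds \<Longrightarrow>
     weighted_chain n (zip Ds as) \<longleftrightarrow> nc_chain n Ds \<and> (\<forall>a\<in>set as. 0 < a)"
proof -
  assume len: "length as = length Ds"
  then have "map fst (zip Ds as) = Ds" "map snd (zip Ds as) = as" by simp_all
  then have "set Ds = fst ` set (zip Ds as)" "set as = snd ` set (zip Ds as)"
    by (metis list.set_map)+
  moreover have "zip Ds as = [] \<longleftrightarrow> Ds = []" using len by (cases Ds) auto
  ultimately show ?thesis
    using len by (auto simp: weighted_chain_def nc_chain_def)
qed

lemma Phi_image_positive_representation:
  assumes "x \<in> Phi_image n"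
  shows "\<exists>Ds as. nc_chain n Ds \<and> length as = length Ds \<and> (\<forall>a\<in>set as. 0 < a) \<and>
           sum_list as = 1 \<and> x = comb n Ds as"
proof -
  obtain Ds as where Ds: "nc_chain n Ds" "length as = length Ds" "\<forall>a\<in>set as. 0 \<le> a"
    "sum_list as = 1" "x = comb n Ds as"
    using assms unfolding Phi_image_def by blast
  define ps where "ps = filter (\<lambda>p. 0 < snd p) (zip Ds as)"
  have nonneg: "\<forall>p\<in>set (zip Ds as). 0 \<le> snd p"
    using Ds(3) by (auto dest: set_zip_rightD)
  have total: "(\<Sum>p\<leftarrow>ps. snd p) = sum_list as"
    unfolding ps_def using Ds(2) nonneg by (subst sum_list_map_filter) auto
  moreover have "chain_point n ps = comb n Ds as"
    using chain_point_filter_pos[OF nonneg] chain_point_zip[OF Ds(2)] unfolding ps_def by auto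
  moreover have "weighted_chain n ps"
  proof -
    have "sorted_wrt (\<lambda>p q. fst p \<subset> fst q) (zip Ds as)"
      using Ds(1,2) by (simp add: nc_chain_def sorted_wrt_map[symmetric])
    then have "sorted_wrt (\<subset>) (map fst ps)"
      unfolding ps_def by (simp add: sorted_wrt_map sorted_wrt_filter)
    moreover have "ps \<noteq> []" using total Ds(4) by auto
    ultimately show ?thesis
      using Ds(1) unfolding weighted_chain_def nc_chain_def ps_def by (auto dest: set_zip_leftD)
  qed
  ultimately show ?thesis
    using weighted_chain_zip[of "map snd ps" "map fst ps" n] Ds(4,5)
    by (metis chain_point_zip length_map zip_map_fst_snd)
qed

lemma positive_representation_unique:
  assumes "4 \<le> n"
    and "nc_chain n Ds" "length as = length Ds" "\<forall>a\<in>set as. 0 < a"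
    and "nc_chain n Ds'" "length as' = length Ds'" "\<forall>a\<in>set as'. 0 < a"
    and "sum_list as = sum_list as'" and "comb n Ds as = comb n Ds' as'"
  shows "Ds = Ds' \<and> as = as'"
proof -
  have "zip Ds as = zip Ds' as'"
    using weighted_chain_unique[OF assms(1), of "zip Ds as" "zip Ds' as'"] assms(2-)
    by (simp add: weighted_chain_zip chain_point_zip)
  then show ?thesis
    using assms(3,6) by (metis map_fst_zip map_snd_zip)
qed

theorem lemma15:
  fixes n :: nat and x :: "(nat \<times> nat) \<Rightarrow> real"
  assumes "n \<ge> 4" and "x \<in> Phi_image n"
  shows "\<exists>!(Ds, as). nc_chain n Ds \<and> length as = length Ds \<and>
           (\<forall>a\<in>set as. a > 0) \<and> sum_list as = 1 \<and> x = comb n Ds as"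
  using Phi_image_positive_representation[OF assms(2)]
    positive_representation_unique[OF assms(1)]
  by (auto intro!: ex1I)

end
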